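(* Let $K$ be a compact Hausdorff space having the extension property. Let $L$ be a compact Hausdorff scattered space of finite height and let $F$ be a closed subset of $L$. Then every isometric copy of $C(L|F)$ in $C(K)$ is complemented; that is, for every linear isometric embedding $S:C(L|F)\to C(K)$, the image $S[C(L|F)]$ is a complemented subspace of $C(K)$.
   Context: All spaces of functions are real. For a compact Hausdorff space $K$, $C(K)$ is the Banach space of real-valued continuous functions on $K$ with the supremum norm. For a closed subset $F\subseteq K$, $\rho_F:C(K)\to C(F)$ is the restriction map $f\mapsto f|_F$, and $C(K|F)=\ker\rho_F$ is the subspace of functions vanishing on $F$. An extension operator for a closed set $F$ in $K$ is a bounded linear map $E_F:C(F)\to C(K)$ with $\rho_F\circ E_F=\mathrm{Id}_{C(F)}$. $K$ has the extension property if every nonempty closed subset of $K$ admits an extension operator in $K$. A scattered space $L$ has finite height if its iterated Cantor--Bendixson derivatives satisfy $L^{(n)}=\emptyset$ for some finite $n$ (where $L'$ is the set of non-isolated points of $L$). *)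

theory Defs
  imports "HOL-Analysis.Analysis"
begin

text \<open>C(K): real continuous functions on the topological space K, normalised to be 0
  outside the carrier (so that each element of C(K) has a unique representative).\<close>
definition cfun :: "'a topology \<Rightarrow> ('a \<Rightarrow> real) set" where
  "cfun K = {f. continuous_map K euclideanreal f \<and> (\<forall>x. x \<notin> topspace K \<longrightarrow> f x = 0)}"

definition supnorm :: "'a topology \<Rightarrow> ('a \<Rightarrow> real) \<Rightarrow> real" where
  "supnorm K f = (if topspace K = {} then 0 else (SUP x\<in>topspace K. \<bar>f x\<bar>))"

text \<open>Restriction map rho_F : C(K) -> C(F) (C(F) taken w.r.t. the subspace topology).\<close>
definition restr :: "'a set \<Rightarrow> ('a \<Rightarrow> real) \<Rightarrow> ('a \<Rightarrow> real)" where
  "restr F f = (\<lambda>x. if x \<in> F then f x else 0)"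

definition cfun_van :: "'a topology \<Rightarrow> 'a set \<Rightarrow> ('a \<Rightarrow> real) set" where
  "cfun_van K F = {f \<in> cfun K. \<forall>x\<in>F. f x = 0}"

definition lin_op :: "('a \<Rightarrow> real) set \<Rightarrow> ('b \<Rightarrow> real) set \<Rightarrow> (('a \<Rightarrow> real) \<Rightarrow> ('b \<Rightarrow> real)) \<Rightarrow> bool" where
  "lin_op A B T \<longleftrightarrow> T ` A \<subseteq> B
     \<and> (\<forall>f\<in>A. \<forall>g\<in>A. T (\<lambda>x. f x + g x) = (\<lambda>y. T f y + T g y))
     \<and> (\<forall>c. \<forall>f\<in>A. T (\<lambda>x. c * f x) = (\<lambda>y. c * T f y))"

definition bdd_lin_op :: "'a topology \<Rightarrow> ('a \<Rightarrow> real) set \<Rightarrow> 'b topology \<Rightarrow> ('b \<Rightarrow> real) set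
     \<Rightarrow> (('a \<Rightarrow> real) \<Rightarrow> ('b \<Rightarrow> real)) \<Rightarrow> bool" where
  "bdd_lin_op K1 A K2 B T \<longleftrightarrow> lin_op A B T \<and>
     (\<exists>M. \<forall>f\<in>A. supnorm K2 (T f) \<le> M * supnorm K1 f)"

definition extension_operator :: "'a topology \<Rightarrow> 'a set \<Rightarrow> (('a \<Rightarrow> real) \<Rightarrow> ('a \<Rightarrow> real)) \<Rightarrow> bool" where
  "extension_operator K F E \<longleftrightarrow>
     bdd_lin_op (subtopology K F) (cfun (subtopology K F)) K (cfun K) E \<and>
     (\<forall>g\<in>cfun (subtopology K F). restr F (E g) = g)"

definition extension_property :: "'a topology \<Rightarrow> bool" where
  "extension_property K \<longleftrightarrow>
     (\<forall>F. closedin K F \<and> F \<noteq> {} \<longrightarrow> (\<exists>E. extension_operator K F E))"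

definition scattered_space :: "'a topology \<Rightarrow> bool" where
  "scattered_space L \<longleftrightarrow>
     (\<forall>S. S \<subseteq> topspace L \<and> S \<noteq> {} \<longrightarrow> (\<exists>x\<in>S. x \<notin> L derived_set_of S))"

fun cb_deriv :: "'a topology \<Rightarrow> nat \<Rightarrow> 'a set" where
  "cb_deriv L 0 = topspace L"
| "cb_deriv L (Suc n) = cb_deriv L n \<inter> (L derived_set_of (cb_deriv L n))"

definition finite_height :: "'a topology \<Rightarrow> bool" where
  "finite_height L \<longleftrightarrow> (\<exists>n. cb_deriv L n = {})"

definition complemented :: "'a topology \<Rightarrow> ('a \<Rightarrow> real) set \<Rightarrow> bool" where
  "complemented K Y \<longleftrightarrow>
     (\<exists>P. bdd_lin_op K (cfun K) K (cfun K) P \<and> P ` cfun K \<subseteq> Y \<and> (\<forall>y\<in>Y. P y = y))"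

end

theory Submission imports Defs begin

text \<open>For y \<in> L - F there is a point k \<in> K and a sign s with S f k = s f(y) for all f (a
  Holsztynski point of y): k is a common point of the closed sets {|S p| = 1}, p ranging over the
  peak functions at y, and a perturbation argument shows that S f k vanishes whenever f(y) does.
  The proof that S[C(L|F)] is complemented is by induction on the height of L over F. Put
  L1 = F \<union> L' and let K1 be the common zero set of S[C(L|L1)]. Via Tietze extensions S induces an
  isometric embedding S1 of C(L1|F) into C(K1), which by induction has a bounded left inverse R1.
  With an extension operator E for K1, a bounded left inverse of S is R g = R1 (g|K1) on L1 and
  R g (x) = \<sigma> x \<cdot> H g (h x) at the isolated points x \<notin> L1, where h x is a Holsztynski point
  of x with sign \<sigma> x and H g = g - E (g|K1) + E (S1 (R1 (g|K1))). Since H g agrees with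
  S1 (R1 (g|K1)) on K1, and limits of the h x are again Holsztynski points (or annihilate S when
  the limit lies in F), R g is continuous. Then S \<circ> R is a bounded projection onto S[C(L|F)].\<close>

section \<open>Continuous functions and the supremum norm\<close>

lemma continuous_map_real_iff_eps:
  "continuous_map X euclideanreal f \<longleftrightarrow>
     (\<forall>x\<in>topspace X. \<forall>e>0. \<exists>U. openin X U \<and> x \<in> U \<and> (\<forall>y\<in>U. \<bar>f y - f x\<bar> < e))"
  unfolding mtopology_is_euclidean[symmetric] Met_TC.continuous_map_to_metric
  by (simp add: dist_real_def abs_minus_commute)

lemma openin_continuous_map_less:
  "continuous_map X euclideanreal f \<Longrightarrow> openin X {x \<in> topspace X. f x < c}"
  using openin_continuous_map_preimage[of X euclideanreal f "{..<c}"] by simp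

lemma openin_continuous_map_greater:
  "continuous_map X euclideanreal f \<Longrightarrow> openin X {x \<in> topspace X. f x > c}"
  using openin_continuous_map_preimage[of X euclideanreal f "{c<..}"] by simp

lemma closedin_continuous_map_le:
  "continuous_map X euclideanreal f \<Longrightarrow> closedin X {x \<in> topspace X. f x \<le> c}"
  using closedin_continuous_map_preimage[of X euclideanreal f "{..c}"] by simp

lemma closedin_continuous_map_ge:
  "continuous_map X euclideanreal f \<Longrightarrow> closedin X {x \<in> topspace X. f x \<ge> c}"
  using closedin_continuous_map_preimage[of X euclideanreal f "{c..}"] by simp

lemma closedin_continuous_map_eq:
  "continuous_map X euclideanreal f \<Longrightarrow> closedin X {x \<in> topspace X. f x = c}"
  using closedin_continuous_map_preimage[of X euclideanreal f "{c}"] by simp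

lemma cfunD:
  "f \<in> cfun X \<Longrightarrow> continuous_map X euclideanreal f"
  "f \<in> cfun X \<Longrightarrow> x \<notin> topspace X \<Longrightarrow> f x = 0"
  by (auto simp: cfun_def)

lemma cfun_add: "f \<in> cfun X \<Longrightarrow> g \<in> cfun X \<Longrightarrow> (\<lambda>x. f x + g x) \<in> cfun X"
  by (auto simp: cfun_def intro: continuous_map_add)

lemma cfun_diff: "f \<in> cfun X \<Longrightarrow> g \<in> cfun X \<Longrightarrow> (\<lambda>x. f x - g x) \<in> cfun X"
  by (auto simp: cfun_def intro: continuous_map_diff)

lemma cfun_scale: "f \<in> cfun X \<Longrightarrow> (\<lambda>x. c * f x) \<in> cfun X"
  by (auto simp: cfun_def intro: continuous_map_real_mult_left)

lemma cfun_zero: "(\<lambda>x. 0) \<in> cfun X"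
  by (auto simp: cfun_def)

lemma cfun_van_cont: "f \<in> cfun_van X F \<Longrightarrow> continuous_map X euclideanreal f"
  by (auto simp: cfun_van_def cfun_def)

lemma cfun_van_add: "f \<in> cfun_van X F \<Longrightarrow> g \<in> cfun_van X F \<Longrightarrow> (\<lambda>x. f x + g x) \<in> cfun_van X F"
  by (auto simp: cfun_van_def intro: cfun_add)

lemma cfun_van_diff: "f \<in> cfun_van X F \<Longrightarrow> g \<in> cfun_van X F \<Longrightarrow> (\<lambda>x. f x - g x) \<in> cfun_van X F"
  by (auto simp: cfun_van_def intro: cfun_diff)

lemma cfun_van_scale: "f \<in> cfun_van X F \<Longrightarrow> (\<lambda>x. c * f x) \<in> cfun_van X F"
  by (auto simp: cfun_van_def intro: cfun_scale)

lemma cfun_van_zero: "(\<lambda>x. 0) \<in> cfun_van X F"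
  by (auto simp: cfun_van_def intro: cfun_zero)

lemma bdd_above_abs_compact_space:
  assumes "compact_space X" "continuous_map X euclideanreal f"
  shows "bdd_above ((\<lambda>x. \<bar>f x\<bar>) ` topspace X)"
proof -
  have "compactin euclideanreal ((\<lambda>x. \<bar>f x\<bar>) ` topspace X)"
    using assms by (metis compact_space_def continuous_map_real_abs image_compactin)
  then show ?thesis
    by (simp add: compactin_euclidean_iff bounded_imp_bdd_above compact_imp_bounded)
qed

lemma abs_le_supnorm:
  assumes "compact_space X" "continuous_map X euclideanreal f" "x \<in> topspace X"
  shows "\<bar>f x\<bar> \<le> supnorm X f"
  using assms bdd_above_abs_compact_space[OF assms(1,2)]
  by (auto simp: supnorm_def intro: cSUP_upper)

lemma supnorm_least:
  assumes "\<And>x. x \<in> topspace X \<Longrightarrow> \<bar>f x\<bar> \<le> c" "0 \<le> c"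
  shows "supnorm X f \<le> c"
  using assms by (auto simp: supnorm_def intro: cSUP_least)

lemma supnorm_empty: "topspace X = {} \<Longrightarrow> supnorm X f = 0"
  by (simp add: supnorm_def)

lemma supnorm_nonneg:
  assumes "compact_space X" "continuous_map X euclideanreal f"
  shows "0 \<le> supnorm X f"
proof (cases "topspace X = {}")
  case False
  then obtain x where "x \<in> topspace X" by blast
  then show ?thesis using abs_le_supnorm[OF assms, of x] by linarith
qed (simp add: supnorm_empty)

lemma supnorm_attained:
  assumes "compact_space X" "continuous_map X euclideanreal f" "topspace X \<noteq> {}"
  shows "\<exists>x\<in>topspace X. \<bar>f x\<bar> = supnorm X f"
proof -
  have "compact ((\<lambda>x. \<bar>f x\<bar>) ` topspace X)"
    using assms
    by (metis compact_space_def compactin_euclidean_iff continuous_map_real_abs image_compactin)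
  then obtain s where s: "s \<in> (\<lambda>x. \<bar>f x\<bar>) ` topspace X" "\<forall>t\<in>(\<lambda>x. \<bar>f x\<bar>) ` topspace X. t \<le> s"
    using compact_attains_sup assms(3) by (metis image_is_empty)
  then obtain x where x: "x \<in> topspace X" "s = \<bar>f x\<bar>" by auto
  have "supnorm X f \<le> s" using s by (intro supnorm_least) auto
  then show ?thesis using x abs_le_supnorm[OF assms(1,2) x(1)] by force
qed

lemma supnorm_eq_0_imp_zero:
  assumes "compact_space X" "f \<in> cfun X" "supnorm X f = 0"
  shows "f = (\<lambda>x. 0)"
proof
  fix x show "f x = 0"
    using abs_le_supnorm[OF assms(1) cfunD(1)[OF assms(2)], of x] assms cfunD(2)[OF assms(2)]
    by (cases "x \<in> topspace X") auto
qed

lemma lin_op_into: "lin_op A B T \<Longrightarrow> f \<in> A \<Longrightarrow> T f \<in> B"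
  by (auto simp: lin_op_def)

lemma lin_op_add: "lin_op A B T \<Longrightarrow> f \<in> A \<Longrightarrow> g \<in> A \<Longrightarrow> T (\<lambda>x. f x + g x) = (\<lambda>y. T f y + T g y)"
  by (simp add: lin_op_def)

lemma lin_op_scale: "lin_op A B T \<Longrightarrow> f \<in> A \<Longrightarrow> T (\<lambda>x. c * f x) = (\<lambda>y. c * T f y)"
  by (simp add: lin_op_def)

lemma lin_op_zero:
  assumes "lin_op A B T" "(\<lambda>x. 0) \<in> A"
  shows "T (\<lambda>x. 0) = (\<lambda>y. 0)"
  using lin_op_scale[OF assms, of 0] by simp

lemma lin_op_diff:
  assumes "lin_op A B T" "f \<in> A" "g \<in> A" "\<And>h c. h \<in> A \<Longrightarrow> (\<lambda>x. c * h x) \<in> A"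
  shows "T (\<lambda>x. f x - g x) = (\<lambda>y. T f y - T g y)"
proof -
  have "T (\<lambda>x. f x + (-1) * g x) = (\<lambda>y. T f y + T (\<lambda>x. (-1) * g x) y)"
    using lin_op_add[OF assms(1,2) assms(4)[OF assms(3)]] .
  also have "\<dots> = (\<lambda>y. T f y - T g y)" using lin_op_scale[OF assms(1,3), of "-1"] by simp
  finally show ?thesis by simp
qed

lemma lin_op_compose: "lin_op A B T \<Longrightarrow> lin_op B C U \<Longrightarrow> lin_op A C (\<lambda>f. U (T f))"
  unfolding lin_op_def by (auto simp: image_subset_iff)

lemma operator_bound_nonneg:
  fixes N1 :: "'a \<Rightarrow> real" and N2 :: "'b \<Rightarrow> real"
  assumes "\<forall>f\<in>A. N2 (T f) \<le> M * N1 f" "\<And>f. f \<in> A \<Longrightarrow> 0 \<le> N1 f"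
  obtains M' where "0 \<le> M'" "\<forall>f\<in>A. N2 (T f) \<le> M' * N1 f"
proof
  show "\<forall>f\<in>A. N2 (T f) \<le> max M 0 * N1 f"
  proof
    fix f assume f: "f \<in> A"
    have "M * N1 f \<le> max M 0 * N1 f" using assms(2)[OF f] by (intro mult_right_mono) auto
    then show "N2 (T f) \<le> max M 0 * N1 f" using assms(1) f by (meson order_trans)
  qed
qed simp

section \<open>Restrictions and extension operators\<close>

lemma restr_cfun:
  assumes "h \<in> cfun K" "C \<subseteq> topspace K"
  shows "restr C h \<in> cfun (subtopology K C)"
proof -
  have "continuous_map (subtopology K C) euclideanreal (restr C h)"
    using continuous_map_from_subtopology[OF cfunD(1)[OF assms(1)]]
    by (rule continuous_map_eq) (simp add: restr_def)
  then show ?thesis using assms(2) by (auto simp: cfun_def restr_def)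
qed

lemma restr_add: "restr C (\<lambda>x. f x + g x) = (\<lambda>y. restr C f y + restr C g y)"
  by (auto simp: restr_def fun_eq_iff)

lemma restr_scale: "restr C (\<lambda>x. c * f x) = (\<lambda>y. c * restr C f y)"
  by (auto simp: restr_def fun_eq_iff)

lemma supnorm_restr_le:
  assumes "compact_space K" "h \<in> cfun K"
  shows "supnorm (subtopology K C) (restr C h) \<le> supnorm K h"
proof (rule supnorm_least)
  fix x assume "x \<in> topspace (subtopology K C)"
  then show "\<bar>restr C h x\<bar> \<le> supnorm K h"
    using abs_le_supnorm[OF assms(1) cfunD(1)[OF assms(2)]] by (simp add: restr_def)
qed (rule supnorm_nonneg[OF assms(1) cfunD(1)[OF assms(2)]])

lemma extension_operator_exists:
  assumes "extension_property K" "closedin K C"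
  obtains E where "extension_operator K C E"
proof (cases "C = {}")
  case True
  have "lin_op (cfun (subtopology K C)) (cfun K) (\<lambda>h x. 0)"
    unfolding lin_op_def using cfun_zero by auto
  moreover have "\<forall>f\<in>cfun (subtopology K C). supnorm K (\<lambda>x. 0) \<le> 0 * supnorm (subtopology K C) f"
    by (auto intro: supnorm_least)
  moreover have "\<forall>g\<in>cfun (subtopology K C). restr C (\<lambda>x. 0) = g"
    using True by (auto simp: restr_def cfun_def)
  ultimately show ?thesis
    using that unfolding extension_operator_def bdd_lin_op_def by blast
qed (use assms that in \<open>auto simp: extension_property_def\<close>)

lemma extension_property_closedin_subtopology:
  assumes cK: "compact_space K" and ep: "extension_property K" and C: "closedin K C"
  shows "extension_property (subtopology K C)"
  unfolding extension_property_def
proof (intro allI impI)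
  fix D assume "closedin (subtopology K C) D \<and> D \<noteq> {}"
  then have D: "closedin K D" "D \<subseteq> C" using closedin_closed_subtopology[OF C] by auto
  obtain E where E: "extension_operator K D E" using extension_operator_exists[OF ep D(1)] .
  obtain M where M: "\<forall>f\<in>cfun (subtopology K D). supnorm K (E f) \<le> M * supnorm (subtopology K D) f"
    and lE: "lin_op (cfun (subtopology K D)) (cfun K) E"
    using E unfolding extension_operator_def bdd_lin_op_def by blast
  have Csub: "C \<subseteq> topspace K" using C closedin_subset by blast
  have "lin_op (cfun (subtopology K D)) (cfun (subtopology K C)) (\<lambda>g. restr C (E g))"
    unfolding lin_op_def using lin_op_into[OF lE] restr_cfun[OF _ Csub]
    by (auto simp: lin_op_add[OF lE] lin_op_scale[OF lE] restr_add restr_scale)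
  moreover have "\<forall>f\<in>cfun (subtopology K D).
      supnorm (subtopology K C) (restr C (E f)) \<le> M * supnorm (subtopology K D) f"
    using M supnorm_restr_le[OF cK lin_op_into[OF lE]] by (meson order_trans)
  moreover have "restr D (restr C h) = restr D h" for h
    using D(2) by (auto simp: restr_def fun_eq_iff)
  then have "\<forall>g\<in>cfun (subtopology K D). restr D (restr C (E g)) = g"
    using E unfolding extension_operator_def by simp
  moreover have "subtopology (subtopology K C) D = subtopology K D"
    using D(2) by (simp add: subtopology_subtopology inf.absorb2)
  ultimately show "\<exists>E. extension_operator (subtopology K C) D E"
    unfolding extension_operator_def bdd_lin_op_def by auto
qed

lemma compact_space_cluster_point:
  assumes K: "compact_space K" and y: "y \<in> topspace L"
    and meets: "\<And>U. openin L U \<Longrightarrow> y \<in> U \<Longrightarrow> B \<inter> U \<noteq> {}"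
    and h: "h ` B \<subseteq> topspace K"
  obtains k where "\<And>U. openin L U \<Longrightarrow> y \<in> U \<Longrightarrow> k \<in> K closure_of (h ` (B \<inter> U))"
proof -
  define \<U> where "\<U> = (\<lambda>U. K closure_of (h ` (B \<inter> U))) ` {U. openin L U \<and> y \<in> U}"
  have "\<Inter>\<F> \<noteq> {}" if \<F>: "finite \<F>" "\<F> \<subseteq> \<U>" for \<F>
  proof -
    obtain \<V> where \<V>: "finite \<V>" "\<V> \<subseteq> {U. openin L U \<and> y \<in> U}"
        "\<F> = (\<lambda>U. K closure_of (h ` (B \<inter> U))) ` \<V>"
      using \<F> unfolding \<U>_def by (meson finite_subset_image)
    define U where "U = topspace L \<inter> \<Inter>\<V>"
    have "openin L U"
    proof (cases "\<V> = {}")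
      case False
      then have "openin L (\<Inter>\<V>)" using \<V> by (intro openin_Inter) auto
      then show ?thesis unfolding U_def by (simp add: openin_Int)
    qed (simp add: U_def)
    moreover have "y \<in> U" using \<V> y by (auto simp: U_def)
    ultimately obtain x where "x \<in> B \<inter> U" using meets by blast
    then have "h x \<in> K closure_of (h ` (B \<inter> U))"
      using h by (intro closure_of_subset[THEN subsetD]) auto
    moreover have "K closure_of (h ` (B \<inter> U)) \<subseteq> \<Inter>\<F>"
    proof (rule Inter_greatest)
      fix C assume "C \<in> \<F>"
      then obtain W where W: "W \<in> \<V>" "C = K closure_of (h ` (B \<inter> W))" using \<V>(3) by blast
      then have "h ` (B \<inter> U) \<subseteq> h ` (B \<inter> W)" by (auto simp: U_def)
      then show "K closure_of (h ` (B \<inter> U)) \<subseteq> C" unfolding W(2) by (rule closure_of_mono)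
    qed
    ultimately show ?thesis by blast
  qed
  moreover have "\<forall>C\<in>\<U>. closedin K C" unfolding \<U>_def by auto
  ultimately have "\<Inter>\<U> \<noteq> {}"
    using K[unfolded compact_space_fip, rule_format, of \<U>] by blast
  then obtain k where k: "k \<in> \<Inter>\<U>" by blast
  show thesis
  proof (rule that)
    fix U assume "openin L U" "y \<in> U"
    then show "k \<in> K closure_of (h ` (B \<inter> U))" using k unfolding \<U>_def by blast
  qed
qed

section \<open>Holsztynski points\<close>

locale isometric_embedding =
  fixes K :: "'a topology" and L :: "'b topology" and F :: "'b set"
    and S :: "('b \<Rightarrow> real) \<Rightarrow> ('a \<Rightarrow> real)"
  assumes compact_K: "compact_space K" and compact_L: "compact_space L"
    and Hausdorff_L: "Hausdorff_space L" and closed_F: "closedin L F"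
    and linear_S: "lin_op (cfun_van L F) (cfun K) S"
    and isometric_S: "\<forall>f\<in>cfun_van L F. supnorm K (S f) = supnorm L f"
begin

abbreviation "V \<equiv> cfun_van L F"

lemma S_in_cfun: "f \<in> V \<Longrightarrow> S f \<in> cfun K"
  using linear_S by (rule lin_op_into)

lemma continuous_S: "f \<in> V \<Longrightarrow> continuous_map K euclideanreal (S f)"
  using S_in_cfun cfunD by blast

lemma S_add: "f \<in> V \<Longrightarrow> g \<in> V \<Longrightarrow> S (\<lambda>x. f x + g x) k = S f k + S g k"
  using lin_op_add[OF linear_S] by metis

lemma S_scale: "f \<in> V \<Longrightarrow> S (\<lambda>x. c * f x) k = c * S f k"
  using lin_op_scale[OF linear_S] by metis

lemma S_diff: "f \<in> V \<Longrightarrow> g \<in> V \<Longrightarrow> S (\<lambda>x. f x - g x) k = S f k - S g k"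
  using lin_op_diff[OF linear_S _ _ cfun_van_scale] by metis

lemma S_zero: "S (\<lambda>x. 0) = (\<lambda>y. 0)"
  using lin_op_zero[OF linear_S cfun_van_zero] .

lemma abs_S_le: "f \<in> V \<Longrightarrow> k \<in> topspace K \<Longrightarrow> \<bar>S f k\<bar> \<le> supnorm L f"
  using abs_le_supnorm[OF compact_K continuous_S] isometric_S by metis

lemma normal_L: "normal_space L"
  using compact_L Hausdorff_L compact_Hausdorff_or_regular_imp_normal_space by blast

definition peak :: "'b \<Rightarrow> ('b \<Rightarrow> real) \<Rightarrow> bool" where
  "peak y p \<longleftrightarrow> p \<in> V \<and> (\<forall>x. 0 \<le> p x \<and> p x \<le> 1) \<and> p y = 1"

lemma peak_exists:
  assumes y: "y \<in> topspace L" "y \<notin> F" and U: "openin L U" "y \<in> U"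
  obtains p where "peak y p" "\<And>x. x \<notin> U \<Longrightarrow> p x = 0"
proof -
  have "closedin L {y}"
    using y Hausdorff_L by (simp add: Hausdorff_imp_t1_space closedin_t1_singleton)
  moreover have "closedin L (topspace L - (U - F))"
  proof -
    have "topspace L - (U - F) = (topspace L - U) \<union> F" using closedin_subset[OF closed_F] by auto
    then show ?thesis using U closed_F by (simp add: closedin_Un closedin_diff)
  qed
  moreover have "disjnt (topspace L - (U - F)) {y}" using y U by (auto simp: disjnt_def)
  ultimately obtain f where f: "continuous_map L (top_of_set {0..1}) f"
      "f ` (topspace L - (U - F)) \<subseteq> {0}" "f ` {y} \<subseteq> {1::real}"
    by (metis Urysohn_lemma[OF normal_L, of _ "{y}" 0 1] zero_le_one)
  define p where "p = (\<lambda>x. if x \<in> topspace L then f x else 0)"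
  have "continuous_map L euclideanreal p"
    using f(1) continuous_map_in_subtopology by (metis (mono_tags) continuous_map_eq p_def)
  moreover have "x \<in> topspace L \<Longrightarrow> f x \<in> {0..1}" for x
    using f(1) by (auto simp: continuous_map_def)
  ultimately have "peak y p"
    using f(2,3) y closedin_subset[OF closed_F]
    by (auto simp: peak_def p_def cfun_van_def cfun_def)
  moreover have "x \<notin> U \<Longrightarrow> p x = 0" for x using f(2) by (auto simp: p_def)
  ultimately show thesis using that by blast
qed

lemma supnorm_peak:
  assumes "peak y p" "y \<in> topspace L"
  shows "supnorm L p = 1"
proof (rule antisym)
  show "supnorm L p \<le> 1" using assms by (intro supnorm_least) (auto simp: peak_def)
  show "1 \<le> supnorm L p"
    using abs_le_supnorm[OF compact_L cfun_van_cont assms(2), of p F] assms by (simp add: peak_def)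
qed

definition mean :: "('b \<Rightarrow> real) \<Rightarrow> ('b \<Rightarrow> real) \<Rightarrow> ('b \<Rightarrow> real)" where
  "mean p q = (\<lambda>x. (1/2) * (p x + q x))"

lemma mean_in_V: "p \<in> V \<Longrightarrow> q \<in> V \<Longrightarrow> mean p q \<in> V"
  unfolding mean_def by (intro cfun_van_scale cfun_van_add)

lemma peak_mean: "peak y p \<Longrightarrow> peak y q \<Longrightarrow> peak y (mean p q)"
  unfolding peak_def using mean_in_V by (auto simp: mean_def) (metis add_mono one_add_one)

lemma S_mean:
  assumes "p \<in> V" "q \<in> V"
  shows "S (mean p q) k = (1/2) * (S p k + S q k)"
proof -
  have "S (\<lambda>x. (1/2) * (p x + q x)) k = (1/2) * S (\<lambda>x. p x + q x) k"
    by (rule S_scale[OF cfun_van_add[OF assms]])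
  then show ?thesis unfolding mean_def by (simp only: S_add[OF assms])
qed

definition norming_set :: "('b \<Rightarrow> real) \<Rightarrow> 'a set" where
  "norming_set p = {k \<in> topspace K. \<bar>S p k\<bar> = 1}"

lemma closedin_norming_set: "p \<in> V \<Longrightarrow> closedin K (norming_set p)"
  unfolding norming_set_def
  by (intro closedin_continuous_map_eq continuous_map_real_abs continuous_S)

lemma norming_set_mean:
  assumes "peak y p" "peak y q" "y \<in> topspace L" "k \<in> norming_set (mean p q)"
  shows "k \<in> norming_set p" "k \<in> norming_set q" "S p k = S q k"
proof -
  have V: "p \<in> V" "q \<in> V" using assms unfolding peak_def by auto
  have k: "k \<in> topspace K" using assms(4) by (simp add: norming_set_def)
  have "\<bar>S p k\<bar> \<le> 1" "\<bar>S q k\<bar> \<le> 1"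
    using abs_S_le[OF V(1) k] abs_S_le[OF V(2) k] supnorm_peak assms by auto
  moreover have "\<bar>(1/2) * (S p k + S q k)\<bar> = 1"
    using assms(4) S_mean[OF V] by (simp add: norming_set_def)
  ultimately have "\<bar>S p k\<bar> = 1 \<and> \<bar>S q k\<bar> = 1 \<and> S p k = S q k"
    by (simp add: abs_if split: if_splits)
  then show "k \<in> norming_set p" "k \<in> norming_set q" "S p k = S q k"
    using k by (simp_all add: norming_set_def)
qed

lemma norming_set_nonempty:
  assumes "peak y p" "y \<in> topspace L"
  shows "norming_set p \<noteq> {}"
proof -
  have V: "p \<in> V" using assms by (simp add: peak_def)
  have n: "supnorm K (S p) = 1" using isometric_S V supnorm_peak[OF assms] by simp
  then have "topspace K \<noteq> {}" using supnorm_empty by force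
  then obtain k where "k \<in> topspace K" "\<bar>S p k\<bar> = supnorm K (S p)"
    using supnorm_attained[OF compact_K continuous_S[OF V]] by blast
  then show ?thesis using n by (auto simp: norming_set_def)
qed

lemma norming_set_Inter_peaks:
  assumes "finite \<Phi>" "\<Phi> \<noteq> {}" "\<forall>p\<in>\<Phi>. peak y p" "y \<in> topspace L"
  shows "\<exists>q. peak y q \<and> norming_set q \<subseteq> \<Inter>(norming_set ` \<Phi>)"
  using assms
proof (induction \<Phi> rule: finite_ne_induct)
  case (insert p \<Phi>)
  then obtain q where "peak y q" "norming_set q \<subseteq> \<Inter>(norming_set ` \<Phi>)" by auto
  moreover have "norming_set (mean p q) \<subseteq> norming_set p \<inter> norming_set q"
    using norming_set_mean[OF _ \<open>peak y q\<close> insert.prems(2)] insert.prems(1) by blast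
  ultimately show ?case using peak_mean insert.prems(1) by blast
qed auto

text \<open>The norming sets of the peak functions at y have the finite intersection property.\<close>
lemma common_norming_point:
  assumes y: "y \<in> topspace L" "y \<notin> F"
  obtains k where "k \<in> topspace K" "\<And>p. peak y p \<Longrightarrow> \<bar>S p k\<bar> = 1"
proof -
  obtain p0 where p0: "peak y p0" using peak_exists[OF y openin_topspace y(1)] .
  let ?U = "norming_set ` {p. peak y p}"
  have "\<Inter>\<F> \<noteq> {}" if \<F>: "finite \<F>" "\<F> \<subseteq> ?U" for \<F>
  proof -
    obtain \<Phi> where \<Phi>: "finite \<Phi>" "\<Phi> \<subseteq> {p. peak y p}" "\<F> = norming_set ` \<Phi>"
      using \<F> by (meson finite_subset_image)
    show ?thesis
    proof (cases "\<Phi> = {}")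
      case False
      then obtain q where "peak y q" "norming_set q \<subseteq> \<Inter>\<F>"
        using norming_set_Inter_peaks[OF \<Phi>(1) False _ y(1)] \<Phi> by auto
      then show ?thesis using norming_set_nonempty[OF _ y(1)] by blast
    qed (use \<Phi> in simp)
  qed
  moreover have "\<forall>C\<in>?U. closedin K C" using closedin_norming_set by (auto simp: peak_def)
  ultimately have "\<Inter>?U \<noteq> {}"
    using compact_K[unfolded compact_space_fip, rule_format, of ?U] by blast
  then obtain k where k: "k \<in> \<Inter>?U" by blast
  show thesis
  proof (rule that)
    show "k \<in> topspace K" using k p0 by (auto simp: norming_set_def)
    fix p assume "peak y p"
    then show "\<bar>S p k\<bar> = 1" using k by (auto simp: norming_set_def)
  qed
qed

text \<open>If f vanishes near y, then for a peak p at y supported there, p + t f has norm at most 1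
  whenever t f does, so s + t S f k stays in [-1,1] for both signs of t, where s = S p k = \<plusminus>1.\<close>
lemma S_vanishes_near:
  assumes y: "y \<in> topspace L" "y \<notin> F" and norming: "\<And>p. peak y p \<Longrightarrow> \<bar>S p k\<bar> = 1"
    and k: "k \<in> topspace K" and f: "f \<in> V"
    and U: "openin L U" "y \<in> U" and f0: "\<And>x. x \<in> U \<Longrightarrow> f x = 0"
  shows "S f k = 0"
proof (cases "supnorm L f = 0")
  case True
  then show ?thesis
    using supnorm_eq_0_imp_zero[OF compact_L, of f] f S_zero by (auto simp: cfun_van_def)
next
  case False
  define c where "c = supnorm L f"
  have c0: "c > 0"
    using False supnorm_nonneg[OF compact_L cfun_van_cont[OF f]] by (simp add: c_def)
  obtain p where p: "peak y p" and p0: "\<And>x. x \<notin> U \<Longrightarrow> p x = 0"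
    using peak_exists[OF y U] by blast
  have pV: "p \<in> V" using p by (simp add: peak_def)
  have bound: "\<bar>S p k + t * S f k\<bar> \<le> 1" if t: "\<bar>t\<bar> \<le> 1 / c" for t
  proof -
    define g where "g = (\<lambda>x. p x + t * f x)"
    have gV: "g \<in> V" unfolding g_def using pV cfun_van_scale[OF f] by (rule cfun_van_add)
    have "\<bar>g x\<bar> \<le> 1" if x: "x \<in> topspace L" for x
    proof (cases "x \<in> U")
      case True then show ?thesis using f0 p by (simp add: g_def peak_def)
    next
      case False
      have "\<bar>f x\<bar> \<le> c" using abs_le_supnorm[OF compact_L cfun_van_cont[OF f] x] by (simp add: c_def)
      then have "\<bar>t * f x\<bar> \<le> (1/c) * c" unfolding abs_mult using t c0 by (intro mult_mono) auto
      then show ?thesis using False p0 c0 by (simp add: g_def)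
    qed
    then have "supnorm L g \<le> 1" by (intro supnorm_least) auto
    then have "\<bar>S g k\<bar> \<le> 1" using abs_S_le[OF gV k] by linarith
    moreover have "S g k = S p k + t * S f k"
      unfolding g_def using S_add[OF pV cfun_van_scale[OF f]] S_scale[OF f] by simp
    ultimately show ?thesis by simp
  qed
  have "\<bar>S p k + (1/c) * S f k\<bar> \<le> 1" "\<bar>S p k + (-1/c) * S f k\<bar> \<le> 1"
    using bound[of "1/c"] bound[of "-1/c"] c0 by auto
  then have "(1/c) * S f k = 0" using norming[OF p] by (auto simp: abs_if split: if_splits)
  then show ?thesis using c0 by simp
qed

text \<open>Truncating f at height e splits it into a part bounded by e and a part vanishing near y.\<close>
lemma S_vanishes_at:
  assumes y: "y \<in> topspace L" "y \<notin> F" and norming: "\<And>p. peak y p \<Longrightarrow> \<bar>S p k\<bar> = 1"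
    and k: "k \<in> topspace K" and f: "f \<in> V" and fy: "f y = 0"
  shows "S f k = 0"
proof -
  have "\<bar>S f k\<bar> \<le> 0 + e" if e: "e > 0" for e
  proof -
    define f2 where "f2 = (\<lambda>x. max (-e) (min e (f x)))"
    define f1 where "f1 = (\<lambda>x. f x - f2 x)"
    have f2V: "f2 \<in> V"
    proof -
      have "continuous_map L euclideanreal f2" unfolding f2_def
        by (intro continuous_map_real_max continuous_map_real_min cfun_van_cont[OF f]
            continuous_map_const[THEN iffD2]) auto
      then show ?thesis using f e unfolding f2_def cfun_van_def cfun_def by auto
    qed
    have f1V: "f1 \<in> V" unfolding f1_def using f f2V by (rule cfun_van_diff)
    define U where "U = {x \<in> topspace L. \<bar>f x\<bar> < e}"
    have "openin L U"
      unfolding U_def by (intro openin_continuous_map_less continuous_map_real_abs cfun_van_cont[OF f])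
    moreover have "y \<in> U" using y fy e by (simp add: U_def)
    moreover have "x \<in> U \<Longrightarrow> f1 x = 0" for x by (auto simp: U_def f1_def f2_def)
    ultimately have "S f1 k = 0" using S_vanishes_near[OF y norming k f1V] by blast
    moreover have "S f k = S f1 k + S f2 k" using S_diff[OF f f2V, of k] unfolding f1_def by simp
    moreover have "supnorm L f2 \<le> e" using e by (intro supnorm_least) (auto simp: f2_def)
    ultimately show ?thesis using abs_S_le[OF f2V k] by simp
  qed
  then show ?thesis using field_le_epsilon[of "\<bar>S f k\<bar>" 0] by simp
qed

lemma S_at_norming_point:
  assumes y: "y \<in> topspace L" "y \<notin> F" and norming: "\<And>p. peak y p \<Longrightarrow> \<bar>S p k\<bar> = 1"
    and k: "k \<in> topspace K"
  obtains s where "\<bar>s\<bar> = 1" "\<forall>f\<in>V. S f k = s * f y"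
proof -
  obtain p where p: "peak y p" using peak_exists[OF y openin_topspace y(1)] by blast
  then have pV: "p \<in> V" by (simp add: peak_def)
  have "S f k = S p k * f y" if f: "f \<in> V" for f
  proof -
    define g where "g = (\<lambda>x. f x - f y * p x)"
    have gV: "g \<in> V" unfolding g_def using f cfun_van_scale[OF pV] by (rule cfun_van_diff)
    have "S g k = 0"
      using S_vanishes_at[OF y norming k gV] p by (simp add: g_def peak_def)
    moreover have "S g k = S f k - f y * S p k"
      unfolding g_def using S_diff[OF f cfun_van_scale[OF pV]] S_scale[OF pV] by simp
    ultimately show ?thesis by simp
  qed
  then show thesis using that norming[OF p] by blast
qed

lemma holsztynski_point:
  assumes "y \<in> topspace L" "y \<notin> F"
  obtains k s where "k \<in> topspace K" "\<bar>s\<bar> = 1" "\<forall>f\<in>V. S f k = s * f y"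
  by (metis common_norming_point[OF assms] S_at_norming_point[OF assms])

lemma S_vanishes_at_cluster_point:
  assumes y: "y \<in> F"
    and pts: "\<And>x. x \<in> B \<Longrightarrow> h x \<in> topspace K \<and> \<bar>\<sigma> x\<bar> = 1 \<and> (\<forall>f\<in>V. S f (h x) = \<sigma> x * f x)"
    and k: "\<And>U. openin L U \<Longrightarrow> y \<in> U \<Longrightarrow> k \<in> K closure_of (h ` (B \<inter> U))"
    and f: "f \<in> V"
  shows "S f k = 0"
proof -
  have "\<bar>S f k\<bar> \<le> 0 + e" if e: "e > 0" for e
  proof -
    define U where "U = {x \<in> topspace L. \<bar>f x\<bar> < e}"
    have "openin L U"
      unfolding U_def by (intro openin_continuous_map_less continuous_map_real_abs cfun_van_cont[OF f])
    moreover have "y \<in> U"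
      using y closedin_subset[OF closed_F] f e by (auto simp: U_def cfun_van_def)
    moreover have "h ` (B \<inter> U) \<subseteq> {k' \<in> topspace K. \<bar>S f k'\<bar> \<le> e}"
      using pts f by (auto simp: U_def abs_mult)
    then have "K closure_of (h ` (B \<inter> U)) \<subseteq> {k' \<in> topspace K. \<bar>S f k'\<bar> \<le> e}"
      by (intro closure_of_minimal closedin_continuous_map_le continuous_map_real_abs continuous_S f)
    ultimately have "k \<in> {k' \<in> topspace K. \<bar>S f k'\<bar> \<le> e}" using k by blast
    then show ?thesis by simp
  qed
  then show ?thesis using field_le_epsilon[of "\<bar>S f k\<bar>" 0] by simp
qed

lemma norming_at_cluster_point:
  assumes y: "y \<in> topspace L"
    and pts: "\<And>x. x \<in> B \<Longrightarrow> h x \<in> topspace K \<and> \<bar>\<sigma> x\<bar> = 1 \<and> (\<forall>f\<in>V. S f (h x) = \<sigma> x * f x)"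
    and k: "\<And>U. openin L U \<Longrightarrow> y \<in> U \<Longrightarrow> k \<in> K closure_of (h ` (B \<inter> U))"
    and p: "peak y p"
  shows "\<bar>S p k\<bar> = 1"
proof -
  have pV: "p \<in> V" using p by (simp add: peak_def)
  have kK: "k \<in> topspace K" using k[OF openin_topspace y] closure_of_subset_topspace by (rule subsetD[rotated])
  have "1 \<le> \<bar>S p k\<bar> + d" if d: "d > 0" for d
  proof -
    define U where "U = {x \<in> topspace L. p x > 1 - d}"
    have "openin L U"
      unfolding U_def by (intro openin_continuous_map_greater cfun_van_cont[OF pV])
    moreover have "y \<in> U" using y p d by (simp add: U_def peak_def)
    moreover have "h ` (B \<inter> U) \<subseteq> {k' \<in> topspace K. \<bar>S p k'\<bar> \<ge> 1 - d}"
      using pts pV p by (auto simp: U_def abs_mult peak_def)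
    then have "K closure_of (h ` (B \<inter> U)) \<subseteq> {k' \<in> topspace K. \<bar>S p k'\<bar> \<ge> 1 - d}"
      by (intro closure_of_minimal closedin_continuous_map_ge continuous_map_real_abs continuous_S pV)
    ultimately have "k \<in> {k' \<in> topspace K. \<bar>S p k'\<bar> \<ge> 1 - d}" using k by blast
    then show ?thesis by simp
  qed
  then have "1 \<le> \<bar>S p k\<bar>" by (rule field_le_epsilon)
  moreover have "\<bar>S p k\<bar> \<le> 1" using abs_S_le[OF pV kK] supnorm_peak[OF p y] by simp
  ultimately show ?thesis by simp
qed

lemma holsztynski_limit:
  assumes y: "y \<in> topspace L"
    and pts: "\<And>x. x \<in> B \<Longrightarrow> h x \<in> topspace K \<and> \<bar>\<sigma> x\<bar> = 1 \<and> (\<forall>f\<in>V. S f (h x) = \<sigma> x * f x)"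
    and meets: "\<And>U. openin L U \<Longrightarrow> y \<in> U \<Longrightarrow> B \<inter> U \<noteq> {}"
  obtains k where "k \<in> K closure_of (h ` B)"
    and "y \<in> F \<Longrightarrow> \<forall>f\<in>V. S f k = 0"
    and "y \<notin> F \<Longrightarrow> \<exists>s. \<bar>s\<bar> = 1 \<and> (\<forall>f\<in>V. S f k = s * f y)"
proof -
  have "h ` B \<subseteq> topspace K" using pts by blast
  then obtain k where k: "\<And>U. openin L U \<Longrightarrow> y \<in> U \<Longrightarrow> k \<in> K closure_of (h ` (B \<inter> U))"
    using compact_space_cluster_point[OF compact_K y meets] by blast
  have kB: "k \<in> K closure_of (h ` B)"
    using k[OF openin_topspace y] closure_of_mono[of "h ` (B \<inter> topspace L)" "h ` B"] by blast
  then have kK: "k \<in> topspace K" using closure_of_subset_topspace by (rule subsetD[rotated])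
  show thesis
  proof (rule that[OF kB])
    show "\<forall>f\<in>V. S f k = 0" if "y \<in> F"
      using S_vanishes_at_cluster_point[OF that pts k] by blast
    show "\<exists>s. \<bar>s\<bar> = 1 \<and> (\<forall>f\<in>V. S f k = s * f y)" if "y \<notin> F"
      using S_at_norming_point[OF y that norming_at_cluster_point[OF y pts k] kK] by blast
  qed
qed

end

section \<open>Removing the isolated points\<close>

lemma cb_deriv_subtopology_Un_derived:
  assumes F: "closedin L F"
  shows "cb_deriv (subtopology L (F \<union> cb_deriv L 1)) j \<subseteq> F \<union> cb_deriv L (Suc j)"
proof (induction j)
  case 0
  show ?case by (simp add: One_nat_def)
next
  case (Suc j)
  let ?T = "cb_deriv (subtopology L (F \<union> cb_deriv L 1)) j"
  let ?C = "cb_deriv L (Suc j)"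
  show ?case
  proof
    fix x assume x: "x \<in> cb_deriv (subtopology L (F \<union> cb_deriv L 1)) (Suc j)"
    then have "x \<in> L derived_set_of ((F \<union> cb_deriv L 1) \<inter> ?T)"
      by (simp only: cb_deriv.simps(2) derived_set_of_subtopology Int_iff)
    moreover have "L derived_set_of ((F \<union> cb_deriv L 1) \<inter> ?T) \<subseteq> L derived_set_of (F \<union> ?C)"
      using Suc.IH by (intro derived_set_of_mono) blast
    ultimately have "x \<in> L derived_set_of F \<or> x \<in> L derived_set_of ?C"
      by (auto simp only: derived_set_of_Un Un_iff)
    moreover have "L derived_set_of F \<subseteq> F"
      using closedin_contains_derived_set[THEN iffD1, OF F] by (rule conjunct1)
    moreover have "x \<in> ?T" using x by (simp only: cb_deriv.simps(2) Int_iff)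
    then have "x \<in> F \<union> ?C" using Suc.IH by blast
    ultimately have "x \<in> F \<or> x \<in> ?C \<inter> L derived_set_of ?C" by blast
    then show "x \<in> F \<union> cb_deriv L (Suc (Suc j))"
      by (simp only: cb_deriv.simps(2)[of L "Suc j"] Un_iff)
  qed
qed

definition bounded_left_inverse ::
    "'a topology \<Rightarrow> 'b topology \<Rightarrow> 'b set \<Rightarrow> (('b \<Rightarrow> real) \<Rightarrow> ('a \<Rightarrow> real))
      \<Rightarrow> (('a \<Rightarrow> real) \<Rightarrow> ('b \<Rightarrow> real)) \<Rightarrow> bool" where
  "bounded_left_inverse K L F S R \<longleftrightarrow>
     bdd_lin_op K (cfun K) L (cfun_van L F) R \<and> (\<forall>f\<in>cfun_van L F. R (S f) = f)"

lemma bounded_left_inverse_trivial: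
  assumes "topspace L \<subseteq> F"
  shows "bounded_left_inverse K L F S (\<lambda>g x. 0)"
proof -
  have "lin_op (cfun K) (cfun_van L F) (\<lambda>g x. 0)"
    unfolding lin_op_def using cfun_van_zero by auto
  moreover have "\<exists>M. \<forall>g\<in>cfun K. supnorm L (\<lambda>x. 0) \<le> M * supnorm K g"
    by (rule exI[of _ 0]) (auto intro: supnorm_least)
  moreover have "f = (\<lambda>x. 0)" if "f \<in> cfun_van L F" for f
    using that assms by (auto simp: cfun_van_def cfun_def)
  ultimately show ?thesis
    unfolding bounded_left_inverse_def bdd_lin_op_def by simp
qed

locale derived_layer = isometric_embedding +
  assumes extension_K: "extension_property K"
begin

definition L1 where "L1 = F \<union> cb_deriv L 1"
definition I where "I = topspace L - L1"
definition K1 where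
  "K1 = topspace K \<inter> \<Inter>((\<lambda>f. {k \<in> topspace K. S f k = 0}) ` cfun_van L L1)"

abbreviation "L1_top \<equiv> subtopology L L1"
abbreviation "K1_top \<equiv> subtopology K K1"

lemma cb_deriv_1: "cb_deriv L 1 = topspace L \<inter> L derived_set_of topspace L"
  by (simp add: One_nat_def)

lemma L1_subset: "L1 \<subseteq> topspace L"
  using closedin_subset[OF closed_F] by (auto simp: L1_def cb_deriv_1)

lemma F_subset_L1: "F \<subseteq> L1"
  by (simp add: L1_def)

lemma closedin_L1: "closedin L L1"
  unfolding L1_def cb_deriv_1 using closed_F closedin_derived_set_of[OF Hausdorff_L]
  by (intro closedin_Un closedin_Int) auto

lemma openin_I_singleton: "x \<in> I \<Longrightarrow> openin L {x}"
proof -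
  assume "x \<in> I"
  then have "x \<in> topspace L" "x \<notin> L derived_set_of topspace L" by (auto simp: I_def L1_def cb_deriv_1)
  then obtain T where T: "x \<in> T" "openin L T" "\<forall>y. y \<noteq> x \<longrightarrow> y \<in> topspace L \<longrightarrow> y \<notin> T"
    unfolding in_derived_set_of by blast
  then have "T = {x}" using openin_subset[OF T(2)] by blast
  then show ?thesis using T by simp
qed

lemma I_subset: "I \<subseteq> topspace L - F"
  by (auto simp: I_def L1_def)

lemma cfun_van_L1_subset: "cfun_van L L1 \<subseteq> V"
  using F_subset_L1 by (auto simp: cfun_van_def)

lemma K1_iff: "k \<in> K1 \<longleftrightarrow> k \<in> topspace K \<and> (\<forall>f\<in>cfun_van L L1. S f k = 0)"
  by (auto simp: K1_def)

lemma closedin_K1: "closedin K K1"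
proof -
  have "K1 = \<Inter>(insert (topspace K) ((\<lambda>f. {k \<in> topspace K. S f k = 0}) ` cfun_van L L1))"
    by (auto simp: K1_def)
  also have "closedin K \<dots>"
    using cfun_van_L1_subset
    by (intro closedin_Inter) (auto intro!: closedin_continuous_map_eq continuous_S)
  finally show ?thesis .
qed

lemma compact_L1_top: "compact_space L1_top"
  by (intro compact_space_subtopology closedin_compact_space compact_L closedin_L1)

lemma compact_K1_top: "compact_space K1_top"
  by (intro compact_space_subtopology closedin_compact_space compact_K closedin_K1)

lemma S_eq_on_K1:
  assumes "f \<in> V" "g \<in> V" "\<forall>x\<in>L1. f x = g x" "k \<in> K1"
  shows "S f k = S g k"
proof -
  have "(\<lambda>x. f x - g x) \<in> cfun_van L L1"
    using cfun_van_diff[OF assms(1,2)] assms(3) by (auto simp: cfun_van_def)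
  then show ?thesis using assms(4) S_diff[OF assms(1,2)] K1_iff by fastforce
qed

definition extend :: "('b \<Rightarrow> real) \<Rightarrow> ('b \<Rightarrow> real)" where
  "extend u = (SOME f. f \<in> V \<and> (\<forall>x\<in>L1. f x = u x) \<and> (\<forall>x. \<bar>f x\<bar> \<le> supnorm L1_top u))"

lemma extend_spec:
  assumes u: "u \<in> cfun_van L1_top F"
  shows "extend u \<in> V" "\<forall>x\<in>L1. extend u x = u x" "\<forall>x. \<bar>extend u x\<bar> \<le> supnorm L1_top u"
proof -
  let ?c = "supnorm L1_top u"
  have uc: "continuous_map L1_top euclideanreal u" using u by (rule cfun_van_cont)
  have c0: "0 \<le> ?c" using supnorm_nonneg[OF compact_L1_top uc] .
  have range: "u ` L1 \<subseteq> {-?c..?c}"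
    using abs_le_supnorm[OF compact_L1_top uc] L1_subset by (fastforce simp: abs_le_iff)
  obtain g where g: "continuous_map L euclideanreal g" "\<And>x. x \<in> L1 \<Longrightarrow> g x = u x"
      "g ` topspace L \<subseteq> {-?c..?c}"
    using Tietze_extension_closed_real_interval[OF normal_L closedin_L1 uc range, of thesis] c0
    by simp
  define f where "f = (\<lambda>x. if x \<in> topspace L then g x else 0)"
  have "continuous_map L euclideanreal f"
    using g(1) by (rule continuous_map_eq) (simp add: f_def)
  moreover have "f x = 0" if "x \<in> F" for x
    using that F_subset_L1 g(2) L1_subset u by (auto simp: f_def cfun_van_def)
  ultimately have "f \<in> V" by (auto simp: cfun_van_def cfun_def f_def)
  moreover have "\<forall>x\<in>L1. f x = u x" using g(2) L1_subset by (auto simp: f_def)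
  moreover have "\<forall>x. \<bar>f x\<bar> \<le> ?c" using g(3) c0 by (force simp: f_def abs_le_iff)
  ultimately have "\<exists>f. f \<in> V \<and> (\<forall>x\<in>L1. f x = u x) \<and> (\<forall>x. \<bar>f x\<bar> \<le> ?c)" by blast
  then have "extend u \<in> V \<and> (\<forall>x\<in>L1. extend u x = u x) \<and> (\<forall>x. \<bar>extend u x\<bar> \<le> ?c)"
    unfolding extend_def by (rule someI_ex)
  then show "extend u \<in> V" "\<forall>x\<in>L1. extend u x = u x" "\<forall>x. \<bar>extend u x\<bar> \<le> ?c" by auto
qed

definition S1 :: "('b \<Rightarrow> real) \<Rightarrow> ('a \<Rightarrow> real)" where
  "S1 u = restr K1 (S (extend u))"

lemma S1_eq:
  assumes "u \<in> cfun_van L1_top F" "f \<in> V" "\<forall>x\<in>L1. f x = u x" "k \<in> K1"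
  shows "S1 u k = S f k"
  using S_eq_on_K1[OF extend_spec(1)[OF assms(1)] assms(2)] extend_spec(2)[OF assms(1)] assms(3,4)
  by (simp add: S1_def restr_def)

lemma S1_outside: "k \<notin> K1 \<Longrightarrow> S1 u k = 0"
  by (simp add: S1_def restr_def)

lemma linear_S1: "lin_op (cfun_van L1_top F) (cfun K1_top) S1"
  unfolding lin_op_def
proof (intro conjI ballI allI)
  show "S1 ` cfun_van L1_top F \<subseteq> cfun K1_top"
    unfolding S1_def using restr_cfun[OF S_in_cfun] extend_spec(1) K1_def by blast
  fix u v assume u: "u \<in> cfun_van L1_top F" and v: "v \<in> cfun_van L1_top F"
  have e: "extend u \<in> V" "extend v \<in> V" using extend_spec u v by blast+
  show "S1 (\<lambda>x. u x + v x) = (\<lambda>k. S1 u k + S1 v k)"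
  proof
    fix k show "S1 (\<lambda>x. u x + v x) k = S1 u k + S1 v k"
    proof (cases "k \<in> K1")
      case True
      have "S1 (\<lambda>x. u x + v x) k = S (\<lambda>x. extend u x + extend v x) k"
        using extend_spec(2)[OF u] extend_spec(2)[OF v] True
        by (intro S1_eq cfun_van_add u v e) auto
      then show ?thesis using True S_add[OF e] by (simp add: S1_def restr_def)
    qed (simp add: S1_outside)
  qed
next
  fix c u assume u: "u \<in> cfun_van L1_top F"
  have e: "extend u \<in> V" using extend_spec u by blast
  show "S1 (\<lambda>x. c * u x) = (\<lambda>k. c * S1 u k)"
  proof
    fix k show "S1 (\<lambda>x. c * u x) k = c * S1 u k"
    proof (cases "k \<in> K1")
      case True
      have "S1 (\<lambda>x. c * u x) k = S (\<lambda>x. c * extend u x) k"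
        using extend_spec(2)[OF u] True by (intro S1_eq cfun_van_scale u e) auto
      then show ?thesis using True S_scale[OF e] by (simp add: S1_def restr_def)
    qed (simp add: S1_outside)
  qed
qed

lemma supnorm_S1_le:
  assumes u: "u \<in> cfun_van L1_top F"
  shows "supnorm K1_top (S1 u) \<le> supnorm L1_top u"
proof (rule supnorm_least)
  fix k assume "k \<in> topspace K1_top"
  then have k: "k \<in> K1" "k \<in> topspace K" by auto
  have "\<bar>S1 u k\<bar> = \<bar>S (extend u) k\<bar>" using k by (simp add: S1_def restr_def)
  also have "\<dots> \<le> supnorm L (extend u)" using abs_S_le[OF extend_spec(1)[OF u] k(2)] .
  also have "\<dots> \<le> supnorm L1_top u"
    using extend_spec(3)[OF u] supnorm_nonneg[OF compact_L1_top cfun_van_cont[OF u]]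
    by (intro supnorm_least) auto
  finally show "\<bar>S1 u k\<bar> \<le> supnorm L1_top u" .
qed (rule supnorm_nonneg[OF compact_L1_top cfun_van_cont[OF u]])

text \<open>The norm of u is attained at some y \<in> L1 - F, and a Holsztynski point of y lies in K1.\<close>
lemma supnorm_S1_ge:
  assumes u: "u \<in> cfun_van L1_top F"
  shows "supnorm L1_top u \<le> supnorm K1_top (S1 u)"
proof -
  have uc: "continuous_map L1_top euclideanreal u" using u by (rule cfun_van_cont)
  have S1c: "continuous_map K1_top euclideanreal (S1 u)"
    using lin_op_into[OF linear_S1 u] cfunD by blast
  have n0: "0 \<le> supnorm K1_top (S1 u)" using supnorm_nonneg[OF compact_K1_top S1c] .
  show ?thesis
  proof (cases "topspace L1_top = {}")
    case True
    then show ?thesis using supnorm_empty n0 by metis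
  next
    case False
    then obtain y where y: "y \<in> topspace L1_top" "\<bar>u y\<bar> = supnorm L1_top u"
      using supnorm_attained[OF compact_L1_top uc] by blast
    show ?thesis
    proof (cases "y \<in> F")
      case True
      then show ?thesis using u y n0 by (simp add: cfun_van_def)
    next
      case False
      have yL: "y \<in> topspace L" "y \<in> L1" using y by auto
      obtain k s where k: "k \<in> topspace K" "\<bar>s\<bar> = 1" "\<forall>f\<in>V. S f k = s * f y"
        using holsztynski_point[OF yL(1) False] .
      have kK1: "k \<in> K1"
        unfolding K1_iff using k cfun_van_L1_subset yL(2) by (auto simp: cfun_van_def)
      have "\<bar>S1 u k\<bar> = \<bar>S (extend u) k\<bar>" using kK1 by (simp add: S1_def restr_def)
      also have "\<dots> = \<bar>u y\<bar>" using k extend_spec[OF u] yL by (simp add: abs_mult)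
      finally have "\<bar>S1 u k\<bar> = supnorm L1_top u" using y by simp
      moreover have "\<bar>S1 u k\<bar> \<le> supnorm K1_top (S1 u)"
        using abs_le_supnorm[OF compact_K1_top S1c] kK1 k by simp
      ultimately show ?thesis by simp
    qed
  qed
qed

lemma isometric_embedding_L1: "isometric_embedding K1_top L1_top F S1"
proof
  show "closedin L1_top F" using closedin_subset_topspace[OF closed_F F_subset_L1] .
  show "\<forall>u\<in>cfun_van L1_top F. supnorm K1_top (S1 u) = supnorm L1_top u"
    using supnorm_S1_le supnorm_S1_ge by (simp add: order_antisym)
qed (use compact_K1_top compact_L1_top Hausdorff_space_subtopology[OF Hausdorff_L] linear_S1 in auto)

lemma extension_K1: "extension_property K1_top"
  using extension_property_closedin_subtopology[OF compact_K extension_K closedin_K1] .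

lemma cb_deriv_L1: "cb_deriv L (Suc n) \<subseteq> F \<Longrightarrow> cb_deriv L1_top n \<subseteq> F"
  using cb_deriv_subtopology_Un_derived[OF closed_F, of n] unfolding L1_def by blast

end

locale derived_layer_inverse = derived_layer +
  fixes R1 :: "('a \<Rightarrow> real) \<Rightarrow> ('b \<Rightarrow> real)"
  assumes R1: "bounded_left_inverse K1_top L1_top F S1 R1"
begin

lemma linear_R1: "lin_op (cfun K1_top) (cfun_van L1_top F) R1"
  using R1 by (simp add: bounded_left_inverse_def bdd_lin_op_def)

definition E where "E = (SOME E. extension_operator K K1 E)"

lemma extension_operator_E: "extension_operator K K1 E"
  unfolding E_def using extension_operator_exists[OF extension_K closedin_K1] by (metis someI_ex)

lemma linear_E: "lin_op (cfun K1_top) (cfun K) E"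
  using extension_operator_E unfolding extension_operator_def bdd_lin_op_def by blast

lemma E_extends:
  assumes "u \<in> cfun K1_top" "k \<in> K1"
  shows "E u k = u k"
proof -
  have "restr K1 (E u) k = u k" using extension_operator_E assms(1) unfolding extension_operator_def by simp
  then show ?thesis using assms(2) by (simp add: restr_def)
qed

definition h :: "'b \<Rightarrow> 'a" where
  "h x = (SOME k. k \<in> topspace K \<and> (\<exists>s. \<bar>s\<bar> = 1 \<and> (\<forall>f\<in>V. S f k = s * f x)))"

definition \<sigma> :: "'b \<Rightarrow> real" where
  "\<sigma> x = (SOME s. \<bar>s\<bar> = 1 \<and> (\<forall>f\<in>V. S f (h x) = s * f x))"

lemma holsztynski_h:
  assumes "x \<in> I"
  shows "h x \<in> topspace K \<and> \<bar>\<sigma> x\<bar> = 1 \<and> (\<forall>f\<in>V. S f (h x) = \<sigma> x * f x)"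
proof -
  have x: "x \<in> topspace L" "x \<notin> F" using assms I_subset by auto
  have "\<exists>k. k \<in> topspace K \<and> (\<exists>s. \<bar>s\<bar> = 1 \<and> (\<forall>f\<in>V. S f k = s * f x))"
    using holsztynski_point[OF x] by metis
  then have k: "h x \<in> topspace K \<and> (\<exists>s. \<bar>s\<bar> = 1 \<and> (\<forall>f\<in>V. S f (h x) = s * f x))"
    unfolding h_def by (rule someI_ex)
  then have "\<bar>\<sigma> x\<bar> = 1 \<and> (\<forall>f\<in>V. S f (h x) = \<sigma> x * f x)"
    unfolding \<sigma>_def by (intro someI_ex[where P = "\<lambda>s. \<bar>s\<bar> = 1 \<and> (\<forall>f\<in>V. S f (h x) = s * f x)"]) blast
  then show ?thesis using k by blast
qed

definition lift :: "('a \<Rightarrow> real) \<Rightarrow> ('b \<Rightarrow> real)" where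
  "lift g = R1 (restr K1 g)"

definition H :: "('a \<Rightarrow> real) \<Rightarrow> ('a \<Rightarrow> real)" where
  "H g = (\<lambda>k. g k - E (restr K1 g) k + E (S1 (lift g)) k)"

definition R :: "('a \<Rightarrow> real) \<Rightarrow> ('b \<Rightarrow> real)" where
  "R g = (\<lambda>x. if x \<in> L1 then lift g x else if x \<in> I then \<sigma> x * H g (h x) else 0)"

lemma restr_K1_in: "g \<in> cfun K \<Longrightarrow> restr K1 g \<in> cfun K1_top"
  using restr_cfun closedin_subset[OF closedin_K1] by blast

lemma lift_in: "g \<in> cfun K \<Longrightarrow> lift g \<in> cfun_van L1_top F"
  unfolding lift_def using lin_op_into[OF linear_R1 restr_K1_in] .

lemma S1_lift_in: "g \<in> cfun K \<Longrightarrow> S1 (lift g) \<in> cfun K1_top"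
  using lin_op_into[OF linear_S1 lift_in] .

lemma H_in: "g \<in> cfun K \<Longrightarrow> H g \<in> cfun K"
  unfolding H_def by (intro cfun_add cfun_diff lin_op_into[OF linear_E] restr_K1_in S1_lift_in)

lemma H_on_K1:
  assumes "g \<in> cfun K" "k \<in> K1"
  shows "H g k = S (extend (lift g)) k"
  using E_extends[OF restr_K1_in[OF assms(1)] assms(2)] E_extends[OF S1_lift_in[OF assms(1)] assms(2)]
    assms(2) by (simp add: H_def S1_def restr_def)

lemma lift_add:
  "g1 \<in> cfun K \<Longrightarrow> g2 \<in> cfun K \<Longrightarrow> lift (\<lambda>x. g1 x + g2 x) = (\<lambda>y. lift g1 y + lift g2 y)"
  unfolding lift_def restr_add by (intro lin_op_add[OF linear_R1] restr_K1_in)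

lemma lift_scale: "g \<in> cfun K \<Longrightarrow> lift (\<lambda>x. c * g x) = (\<lambda>y. c * lift g y)"
  unfolding lift_def restr_scale by (intro lin_op_scale[OF linear_R1] restr_K1_in)

lemma H_add:
  assumes g: "g1 \<in> cfun K" "g2 \<in> cfun K"
  shows "H (\<lambda>x. g1 x + g2 x) k = H g1 k + H g2 k"
proof -
  have "E (restr K1 (\<lambda>x. g1 x + g2 x)) = (\<lambda>y. E (restr K1 g1) y + E (restr K1 g2) y)"
    unfolding restr_add by (intro lin_op_add[OF linear_E] restr_K1_in g)
  moreover have "S1 (lift (\<lambda>x. g1 x + g2 x)) = (\<lambda>y. S1 (lift g1) y + S1 (lift g2) y)"
    unfolding lift_add[OF g] by (intro lin_op_add[OF linear_S1] lift_in g)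
  moreover have "E (\<lambda>y. S1 (lift g1) y + S1 (lift g2) y) = (\<lambda>y. E (S1 (lift g1)) y + E (S1 (lift g2)) y)"
    by (intro lin_op_add[OF linear_E] S1_lift_in g)
  ultimately show ?thesis unfolding H_def by simp
qed

lemma H_scale:
  assumes g: "g \<in> cfun K"
  shows "H (\<lambda>x. c * g x) k = c * H g k"
proof -
  have "E (restr K1 (\<lambda>x. c * g x)) = (\<lambda>y. c * E (restr K1 g) y)"
    unfolding restr_scale by (intro lin_op_scale[OF linear_E] restr_K1_in g)
  moreover have "S1 (lift (\<lambda>x. c * g x)) = (\<lambda>y. c * S1 (lift g) y)"
    unfolding lift_scale[OF g] by (intro lin_op_scale[OF linear_S1] lift_in g)
  moreover have "E (\<lambda>y. c * S1 (lift g) y) = (\<lambda>y. c * E (S1 (lift g)) y)"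
    by (intro lin_op_scale[OF linear_E] S1_lift_in g)
  ultimately show ?thesis unfolding H_def by (simp add: algebra_simps)
qed

lemma R_add: "g1 \<in> cfun K \<Longrightarrow> g2 \<in> cfun K \<Longrightarrow> R (\<lambda>x. g1 x + g2 x) = (\<lambda>y. R g1 y + R g2 y)"
  unfolding R_def by (simp add: lift_add H_add distrib_left fun_eq_iff)

lemma R_scale: "g \<in> cfun K \<Longrightarrow> R (\<lambda>x. c * g x) = (\<lambda>y. c * R g y)"
  unfolding R_def by (simp add: lift_scale H_scale fun_eq_iff)

lemma R_left_inverse:
  assumes f: "f \<in> V"
  shows "R (S f) = f"
proof -
  have fL1: "restr L1 f \<in> cfun_van L1_top F"
    using restr_cfun[of f L L1] f L1_subset F_subset_L1 by (auto simp: cfun_van_def restr_def)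
  have "restr K1 (S f) = S1 (restr L1 f)"
    using S1_eq[OF fL1 f] S1_outside by (auto simp: restr_def fun_eq_iff)
  then have lift: "lift (S f) = restr L1 f"
    unfolding lift_def using R1 fL1 by (simp add: bounded_left_inverse_def)
  then have H: "H (S f) = S f"
    unfolding H_def by (simp add: \<open>restr K1 (S f) = S1 (restr L1 f)\<close>)
  show ?thesis
  proof
    fix x show "R (S f) x = f x"
    proof (cases "x \<in> I")
      case True
      then have "\<bar>\<sigma> x\<bar> = 1" "S f (h x) = \<sigma> x * f x" using holsztynski_h f by auto
      then have "\<sigma> x * S f (h x) = f x" by (metis abs_mult_self_eq mult.assoc mult_1)
      then show ?thesis using True by (simp add: R_def H I_def)
    next
      case False
      then show ?thesis using f by (auto simp: R_def lift restr_def I_def cfun_van_def cfun_def)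
    qed
  qed
qed

lemma lift_bound:
  obtains B where "0 \<le> B" "\<And>g. g \<in> cfun K \<Longrightarrow> supnorm L1_top (lift g) \<le> B * supnorm K g"
proof -
  obtain M where M: "\<forall>u\<in>cfun K1_top. supnorm L1_top (R1 u) \<le> M * supnorm K1_top u"
    using R1 unfolding bounded_left_inverse_def bdd_lin_op_def by blast
  obtain B where B: "0 \<le> B" "\<forall>u\<in>cfun K1_top. supnorm L1_top (R1 u) \<le> B * supnorm K1_top u"
    using operator_bound_nonneg[OF M supnorm_nonneg[OF compact_K1_top cfunD(1)]] by blast
  have "supnorm L1_top (lift g) \<le> B * supnorm K g" if g: "g \<in> cfun K" for g
  proof -
    have "supnorm L1_top (lift g) \<le> B * supnorm K1_top (restr K1 g)"
      unfolding lift_def using B(2) restr_K1_in[OF g] by blast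
    also have "\<dots> \<le> B * supnorm K g"
      using supnorm_restr_le[OF compact_K g] B(1) by (rule mult_left_mono)
    finally show ?thesis .
  qed
  then show thesis using that B(1) by blast
qed

lemma H_bound:
  obtains C where "0 \<le> C" "\<And>g k. g \<in> cfun K \<Longrightarrow> k \<in> topspace K \<Longrightarrow> \<bar>H g k\<bar> \<le> C * supnorm K g"
proof -
  obtain B where B: "0 \<le> B" "\<And>g. g \<in> cfun K \<Longrightarrow> supnorm L1_top (lift g) \<le> B * supnorm K g"
    using lift_bound by blast
  obtain M where M: "\<forall>u\<in>cfun K1_top. supnorm K (E u) \<le> M * supnorm K1_top u"
    using extension_operator_E unfolding extension_operator_def bdd_lin_op_def by blast
  obtain A where A: "0 \<le> A" "\<forall>u\<in>cfun K1_top. supnorm K (E u) \<le> A * supnorm K1_top u"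
    using operator_bound_nonneg[OF M supnorm_nonneg[OF compact_K1_top cfunD(1)]] by blast
  have "\<bar>H g k\<bar> \<le> (1 + A + A * B) * supnorm K g" if g: "g \<in> cfun K" and k: "k \<in> topspace K" for g k
  proof -
    have abs_E: "\<bar>E u k\<bar> \<le> A * supnorm K1_top u" if "u \<in> cfun K1_top" for u
      using abs_le_supnorm[OF compact_K cfunD(1)[OF lin_op_into[OF linear_E that]] k] A(2) that
      by fastforce
    have "\<bar>g k\<bar> \<le> supnorm K g" using abs_le_supnorm[OF compact_K cfunD(1)[OF g] k] .
    moreover have "\<bar>E (restr K1 g) k\<bar> \<le> A * supnorm K g"
      using abs_E[OF restr_K1_in[OF g]] mult_left_mono[OF supnorm_restr_le[OF compact_K g, of K1] A(1)]
      by linarith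
    moreover have "\<bar>E (S1 (lift g)) k\<bar> \<le> A * (B * supnorm K g)"
    proof -
      have "supnorm K1_top (S1 (lift g)) = supnorm L1_top (lift g)"
        using isometric_embedding.isometric_S[OF isometric_embedding_L1] lift_in[OF g] by blast
      then have "\<bar>E (S1 (lift g)) k\<bar> \<le> A * supnorm L1_top (lift g)"
        using abs_E[OF S1_lift_in[OF g]] by simp
      then show ?thesis using mult_left_mono[OF B(2)[OF g] A(1)] by linarith
    qed
    ultimately show ?thesis unfolding H_def by (simp add: algebra_simps)
  qed
  moreover have "0 \<le> 1 + A + A * B" using A(1) B(1) by simp
  ultimately show thesis using that by blast
qed

lemma R_bound: "\<exists>M. \<forall>g\<in>cfun K. supnorm L (R g) \<le> M * supnorm K g"
proof -
  obtain B where B: "0 \<le> B" "\<And>g. g \<in> cfun K \<Longrightarrow> supnorm L1_top (lift g) \<le> B * supnorm K g"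
    using lift_bound by blast
  obtain C where C: "0 \<le> C" "\<And>g k. g \<in> cfun K \<Longrightarrow> k \<in> topspace K \<Longrightarrow> \<bar>H g k\<bar> \<le> C * supnorm K g"
    using H_bound by blast
  have "supnorm L (R g) \<le> max B C * supnorm K g" if g: "g \<in> cfun K" for g
  proof (rule supnorm_least)
    have n0: "0 \<le> supnorm K g" using supnorm_nonneg[OF compact_K cfunD(1)[OF g]] .
    then show "0 \<le> max B C * supnorm K g" using B(1) by simp
    fix x assume x: "x \<in> topspace L"
    show "\<bar>R g x\<bar> \<le> max B C * supnorm K g"
    proof (cases "x \<in> L1")
      case True
      then have "\<bar>R g x\<bar> \<le> supnorm L1_top (lift g)"
        using x abs_le_supnorm[OF compact_L1_top cfun_van_cont[OF lift_in[OF g]]] by (simp add: R_def)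
      also have "\<dots> \<le> max B C * supnorm K g"
        using B(2)[OF g] mult_right_mono[OF max.cobounded1 n0] by (rule order_trans)
      finally show ?thesis .
    next
      case False
      then have xI: "x \<in> I" using x by (simp add: I_def)
      then have "\<bar>R g x\<bar> = \<bar>H g (h x)\<bar>" using holsztynski_h[OF xI] False by (simp add: R_def abs_mult)
      also have "\<dots> \<le> max B C * supnorm K g"
        using C(2)[OF g] holsztynski_h[OF xI] mult_right_mono[OF max.cobounded2 n0] by (meson order_trans)
      finally show ?thesis .
    qed
  qed
  then show ?thesis by blast
qed

lemma H_at_evaluation_point:
  assumes g: "g \<in> cfun K" and y: "y \<in> L1" and k: "k \<in> topspace K"
    and eval: "\<forall>f\<in>V. S f k = s * f y"
  shows "H g k = s * lift g y"
proof -
  have "k \<in> K1" using eval k cfun_van_L1_subset y by (auto simp: K1_iff cfun_van_def)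
  then show ?thesis using H_on_K1[OF g] eval extend_spec[OF lift_in[OF g]] y by simp
qed

text \<open>Off F, the sign \<sigma> x is pinned down by a peak function p at y: |\<sigma> x p x - s| < 1 forces
  \<sigma> x = s.\<close>
lemma H_near_limit:
  assumes g: "g \<in> cfun K" and y: "y \<in> L1" and k: "k \<in> topspace K" and e: "e > 0"
    and at_F: "y \<in> F \<Longrightarrow> \<forall>f\<in>V. S f k = 0"
    and off_F: "y \<notin> F \<Longrightarrow> \<exists>s. \<bar>s\<bar> = 1 \<and> (\<forall>f\<in>V. S f k = s * f y)"
  obtains W where "openin K W" "k \<in> W"
    "\<And>x. x \<in> I \<Longrightarrow> h x \<in> W \<Longrightarrow> \<bar>\<sigma> x * H g (h x) - lift g y\<bar> < e"
proof -
  have yL: "y \<in> topspace L" using y L1_subset by blast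
  have Hc: "continuous_map K euclideanreal (H g)" using cfunD(1)[OF H_in[OF g]] .
  define W where "W = {k' \<in> topspace K. \<bar>H g k' - H g k\<bar> < e}"
  have W: "openin K W" "k \<in> W"
    using k e unfolding W_def
    by (auto intro!: openin_continuous_map_less continuous_map_real_abs continuous_map_diff Hc)
  show thesis
  proof (cases "y \<in> F")
    case True
    then have "lift g y = 0" using lift_in[OF g] by (simp add: cfun_van_def)
    moreover have "H g k = 0" using H_at_evaluation_point[OF g y k, of 0] at_F[OF True] by simp
    ultimately have "\<bar>\<sigma> x * H g (h x) - lift g y\<bar> < e" if "x \<in> I" "h x \<in> W" for x
      using that holsztynski_h[OF that(1)] by (simp add: W_def abs_mult)
    then show thesis using that[OF W] by blast
  next
    case False
    obtain s where s: "\<bar>s\<bar> = 1" "\<forall>f\<in>V. S f k = s * f y" using off_F[OF False] by blast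
    have Hk: "H g k = s * lift g y" using H_at_evaluation_point[OF g y k s(2)] .
    obtain p where p: "peak y p" using peak_exists[OF yL False openin_topspace yL] by blast
    then have pV: "p \<in> V" by (simp add: peak_def)
    define W' where "W' = W \<inter> {k' \<in> topspace K. \<bar>S p k' - s\<bar> < 1}"
    have "openin K W'"
      unfolding W'_def using W(1) continuous_S[OF pV]
      by (intro openin_Int openin_continuous_map_less continuous_map_real_abs continuous_map_diff)
        auto
    moreover have "k \<in> W'" using W(2) k s(2) pV p by (simp add: W'_def peak_def)
    moreover have "\<bar>\<sigma> x * H g (h x) - lift g y\<bar> < e" if x: "x \<in> I" "h x \<in> W'" for x
    proof -
      have "\<bar>\<sigma> x * p x - s\<bar> < 1" "\<bar>\<sigma> x\<bar> = 1"
        using x holsztynski_h[OF x(1)] pV by (auto simp: W'_def)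
      moreover have "0 \<le> p x" using p by (simp add: peak_def)
      ultimately have "\<sigma> x = s" using s(1) by (auto simp: abs_if split: if_splits)
      then have "\<bar>\<sigma> x * H g (h x) - lift g y\<bar> = \<bar>H g (h x) - H g k\<bar>"
        using Hk s(1) by (auto simp: abs_if algebra_simps split: if_splits)
      then show ?thesis using x(2) by (simp add: W'_def W_def)
    qed
    ultimately show thesis by (rule that)
  qed
qed

lemma R_near_L1:
  assumes g: "g \<in> cfun K" and y: "y \<in> L1" and e: "e > 0"
  shows "\<exists>U. openin L U \<and> y \<in> U \<and> (\<forall>x\<in>U \<inter> I. \<bar>\<sigma> x * H g (h x) - lift g y\<bar> < e)"
proof (rule ccontr)
  assume none: "\<not> ?thesis"
  define B where "B = {x \<in> I. \<bar>\<sigma> x * H g (h x) - lift g y\<bar> \<ge> e}"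
  have yL: "y \<in> topspace L" using y L1_subset by blast
  have meets: "B \<inter> U \<noteq> {}" if "openin L U" "y \<in> U" for U
  proof
    assume "B \<inter> U = {}"
    then have "\<forall>x\<in>U \<inter> I. \<bar>\<sigma> x * H g (h x) - lift g y\<bar> < e" by (auto simp: B_def not_le)
    then show False using none that by blast
  qed
  have pts: "h x \<in> topspace K \<and> \<bar>\<sigma> x\<bar> = 1 \<and> (\<forall>f\<in>V. S f (h x) = \<sigma> x * f x)" if "x \<in> B" for x
    using holsztynski_h that by (simp add: B_def)
  obtain k where k: "k \<in> K closure_of (h ` B)"
    and at_F: "y \<in> F \<Longrightarrow> \<forall>f\<in>V. S f k = 0"
    and off_F: "y \<notin> F \<Longrightarrow> \<exists>s. \<bar>s\<bar> = 1 \<and> (\<forall>f\<in>V. S f k = s * f y)"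
    using holsztynski_limit[OF yL pts meets] by blast
  have kK: "k \<in> topspace K" using k closure_of_subset_topspace by (rule subsetD[rotated])
  obtain W where W: "openin K W" "k \<in> W"
    and near: "\<And>x. x \<in> I \<Longrightarrow> h x \<in> W \<Longrightarrow> \<bar>\<sigma> x * H g (h x) - lift g y\<bar> < e"
    using H_near_limit[OF g y kK e at_F off_F] by blast
  obtain z where "z \<in> h ` B" "z \<in> W" using k W unfolding in_closure_of by blast
  then obtain x where "x \<in> B" "h x \<in> W" by blast
  then show False using near[of x] by (simp add: B_def)
qed

lemma continuous_R:
  assumes g: "g \<in> cfun K"
  shows "continuous_map L euclideanreal (R g)"
  unfolding continuous_map_real_iff_eps
proof (intro ballI allI impI)
  fix y e assume y: "y \<in> topspace L" and e: "(e::real) > 0"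
  show "\<exists>U. openin L U \<and> y \<in> U \<and> (\<forall>z\<in>U. \<bar>R g z - R g y\<bar> < e)"
  proof (cases "y \<in> L1")
    case False
    then have "openin L {y}" using y openin_I_singleton by (simp add: I_def)
    then show ?thesis using e by auto
  next
    case True
    have "continuous_map L1_top euclideanreal (lift g)" using cfun_van_cont[OF lift_in[OF g]] .
    then have "\<exists>U1. openin L1_top U1 \<and> y \<in> U1 \<and> (\<forall>z\<in>U1. \<bar>lift g z - lift g y\<bar> < e)"
      using y True e unfolding continuous_map_real_iff_eps by auto
    then obtain U1 where U1: "openin L1_top U1" "y \<in> U1" "\<forall>z\<in>U1. \<bar>lift g z - lift g y\<bar> < e"
      by blast
    then obtain T where T: "openin L T" "U1 = T \<inter> L1" by (auto simp: openin_subtopology)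
    obtain U2 where U2: "openin L U2" "y \<in> U2"
      "\<forall>x\<in>U2 \<inter> I. \<bar>\<sigma> x * H g (h x) - lift g y\<bar> < e"
      using R_near_L1[OF g True e] by blast
    have "\<bar>R g z - R g y\<bar> < e" if z: "z \<in> T \<inter> U2" for z
    proof (cases "z \<in> L1")
      case True
      then show ?thesis using z T(2) U1(3) \<open>y \<in> L1\<close> by (auto simp: R_def)
    next
      case False
      then have "z \<in> I" using z openin_subset[OF U2(1)] by (auto simp: I_def)
      then show ?thesis using z U2(3) False \<open>y \<in> L1\<close> by (auto simp: R_def)
    qed
    moreover have "openin L (T \<inter> U2)" "y \<in> T \<inter> U2" using T U1 U2 by auto
    ultimately show ?thesis by blast
  qed
qed

lemma bounded_left_inverse_R: "bounded_left_inverse K L F S R"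
proof -
  have "R g \<in> V" if g: "g \<in> cfun K" for g
  proof -
    have "R g x = 0" if "x \<notin> topspace L \<or> x \<in> F" for x
      using that L1_subset F_subset_L1 lift_in[OF g] by (auto simp: R_def I_def cfun_van_def)
    then show ?thesis using continuous_R[OF g] by (auto simp: cfun_van_def cfun_def)
  qed
  then have "lin_op (cfun K) V R" unfolding lin_op_def using R_add R_scale by blast
  then show ?thesis
    unfolding bounded_left_inverse_def bdd_lin_op_def using R_bound R_left_inverse by blast
qed

end

section \<open>Complementation\<close>

lemma bounded_left_inverse_exists:
  assumes "compact_space K" "extension_property K"
    and "compact_space L" "Hausdorff_space L" "closedin L F"
    and "lin_op (cfun_van L F) (cfun K) S" "\<forall>f\<in>cfun_van L F. supnorm K (S f) = supnorm L f"
    and "cb_deriv L n \<subseteq> F"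
  shows "\<exists>R. bounded_left_inverse K L F S R"
  using assms
proof (induction n arbitrary: K L S)
  case 0
  then show ?case using bounded_left_inverse_trivial by fastforce
next
  case (Suc n)
  interpret derived_layer K L F S
    using Suc.prems by unfold_locales auto
  obtain R1 where "bounded_left_inverse K1_top L1_top F S1 R1"
    using Suc.IH[OF _ extension_K1 _ _ _ _ _ cb_deriv_L1[OF Suc.prems(8)]]
      isometric_embedding_L1 unfolding isometric_embedding_def by blast
  then interpret derived_layer_inverse K L F S R1
    by unfold_locales
  show ?case using bounded_left_inverse_R by blast
qed

lemma complemented_range_if_bounded_left_inverse:
  assumes S: "lin_op (cfun_van L F) (cfun K) S"
    and iso: "\<forall>f\<in>cfun_van L F. supnorm K (S f) = supnorm L f"
    and R: "bounded_left_inverse K L F S R"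
  shows "complemented K (S ` cfun_van L F)"
proof -
  obtain M where linR: "lin_op (cfun K) (cfun_van L F) R"
    and M: "\<forall>g\<in>cfun K. supnorm L (R g) \<le> M * supnorm K g"
    and inv: "\<forall>f\<in>cfun_van L F. R (S f) = f"
    using R unfolding bounded_left_inverse_def bdd_lin_op_def by blast
  have "lin_op (cfun K) (cfun K) (\<lambda>g. S (R g))" using lin_op_compose[OF linR S] .
  moreover have "\<forall>g\<in>cfun K. supnorm K (S (R g)) \<le> M * supnorm K g"
    using M iso lin_op_into[OF linR] by simp
  moreover have "(\<lambda>g. S (R g)) ` cfun K \<subseteq> S ` cfun_van L F" using lin_op_into[OF linR] by blast
  moreover have "\<forall>y\<in>S ` cfun_van L F. S (R y) = y" using inv by auto
  ultimately show ?thesis unfolding complemented_def bdd_lin_op_def by blast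
qed

theorem theorem2p4:
  fixes K :: "'a topology" and L :: "'b topology" and F :: "'b set"
    and S :: "('b \<Rightarrow> real) \<Rightarrow> ('a \<Rightarrow> real)"
  assumes "compact_space K" and "Hausdorff_space K" and "extension_property K"
    and "compact_space L" and "Hausdorff_space L"
    and "scattered_space L" and "finite_height L"
    and "closedin L F"
    and "lin_op (cfun_van L F) (cfun K) S"
    and "\<forall>f\<in>cfun_van L F. supnorm K (S f) = supnorm L f"
  shows "complemented K (S ` cfun_van L F)"
proof -
  obtain n where "cb_deriv L n = {}" using \<open>finite_height L\<close> unfolding finite_height_def by blast
  then obtain R where "bounded_left_inverse K L F S R"
    using bounded_left_inverse_exists[of K L F S n] assms by blast
  then show ?thesis using complemented_range_if_bounded_left_inverse assms(9,10) by blast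
qed

end
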